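(* Let $S\subset\mathbb{N}$ be a WM set with density $d(S)<1$. Then $S$ is not an IP*-set, i.e. there exists an IP-set $E$ with $E\cap S=\emptyset$.
   Context: $\mathbb{N}=\{1,2,\dots\}$. An IP-set is a set $\{p_{i_1}+\dots+p_{i_k}: k\in\mathbb{N},\ i_1<\dots<i_k\}$ for an infinite sequence $(p_i)$ of natural numbers. $S$ is an IP*-set if $S$ meets every IP-set. $\Omega=\{0,1\}^{\mathbb{N}}$ with product topology and left shift $T$; $X_{1_S}$ is the closure of $\{T^n1_S:n\ge0\}$. A point $\xi$ is generic for $(X,\mu,T)$ if $\frac1N\sum_{n=0}^{N-1}f(T^n\xi)\to\int f\,d\mu$ for all continuous $f$. $d(S)=\lim_N\frac1N|S\cap\{1,\dots,N\}|$. $S$ is a WM set if for some $T$-invariant Borel probability $\mu$ on $X_{1_S}$, $1_S$ is generic for $(X_{1_S},\mu,T)$, this system is weakly mixing, and $d(S)>0$. *)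

theory Defs
  imports "HOL-Analysis.Analysis" "HOL-Probability.Probability"
begin

text \<open>Points of Omega = {0,1}^N (N = {1,2,...}) are functions nat => bool, where
  the coordinate with index i represents the coordinate i+1 of the paper.\<close>

definition shift :: "(nat \<Rightarrow> bool) \<Rightarrow> (nat \<Rightarrow> bool)" where
  "shift x = (\<lambda>i. x (Suc i))"

definition indic_pt :: "nat set \<Rightarrow> (nat \<Rightarrow> bool)" where
  "indic_pt S = (\<lambda>i. Suc i \<in> S)"

definition orbit_closure :: "(nat \<Rightarrow> bool) \<Rightarrow> (nat \<Rightarrow> bool) set" where
  "orbit_closure \<xi> = closure (range (\<lambda>n. (shift ^^ n) \<xi>))"

definition invariant_borel_prob ::
  "(nat \<Rightarrow> bool) set \<Rightarrow> (nat \<Rightarrow> bool) measure \<Rightarrow> bool" where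
  "invariant_borel_prob X M \<longleftrightarrow>
     prob_space M \<and> space M = X \<and> sets M = sets (restrict_space borel X) \<and>
     shift \<in> measurable M M \<and> distr M M shift = M"

definition generic_point ::
  "(nat \<Rightarrow> bool) set \<Rightarrow> (nat \<Rightarrow> bool) measure \<Rightarrow> (nat \<Rightarrow> bool) \<Rightarrow> bool" where
  "generic_point X M \<xi> \<longleftrightarrow>
     (\<forall>f :: (nat \<Rightarrow> bool) \<Rightarrow> real. continuous_on X f \<longrightarrow>
        (\<lambda>N. (\<Sum>n<N. f ((shift ^^ n) \<xi>)) / real N) \<longlonglongrightarrow> integral\<^sup>L M f)"

definition weakly_mixing :: "(nat \<Rightarrow> bool) measure \<Rightarrow> bool" where
  "weakly_mixing M \<longleftrightarrow>
     (\<forall>A\<in>sets M. \<forall>B\<in>sets M.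
        (\<lambda>N. (\<Sum>n<N. \<bar>measure M (A \<inter> ((shift ^^ n) -` B \<inter> space M))
                        - measure M A * measure M B\<bar>) / real N) \<longlonglongrightarrow> 0)"

definition has_density :: "nat set \<Rightarrow> real \<Rightarrow> bool" where
  "has_density S d \<longleftrightarrow> (\<lambda>N. real (card (S \<inter> {1..N})) / real N) \<longlonglongrightarrow> d"

definition WM_set :: "nat set \<Rightarrow> bool" where
  "WM_set S \<longleftrightarrow> S \<subseteq> {1..} \<and>
     (\<exists>M. invariant_borel_prob (orbit_closure (indic_pt S)) M \<and>
          generic_point (orbit_closure (indic_pt S)) M (indic_pt S) \<and>
          weakly_mixing M) \<and>
     (\<exists>d. has_density S d \<and> d > 0)"

definition IP_set :: "nat set \<Rightarrow> bool" where
  "IP_set E \<longleftrightarrow> (\<exists>p :: nat \<Rightarrow> nat. (\<forall>i. p i \<ge> 1) \<and>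
     E = {(\<Sum>i\<in>F. p i) | F. finite F \<and> F \<noteq> {}})"

definition IP_star_set :: "nat set \<Rightarrow> bool" where
  "IP_star_set S \<longleftrightarrow> (\<forall>E. IP_set E \<longrightarrow> E \<inter> S \<noteq> {})"

end

theory Submission
  imports Defs
begin

text \<open>For finite \<open>D\<close> let \<open>C_D\<close> be the clopen set of points of \<open>X\<close> vanishing on \<open>D\<close>.
  Genericity of \<open>1_S\<close> turns \<open>\<mu>(C_D)\<close> into the frequency of visits of the orbit of \<open>1_S\<close> to
  \<open>C_D\<close>; in particular \<open>\<mu>(C_{0}) = 1 - d(S) > 0\<close>. If \<open>\<mu>(C_D) > 0\<close> and
  \<open>\<mu>(C_D \<inter> T^-(n+1) C_D)\<close> vanished at every visit time \<open>n\<close>, the Cesaro averages of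
  \<open>|\<mu>(C_D \<inter> T^-n C_D) - \<mu>(C_D)\<^sup>2|\<close> would tend to at least \<open>\<mu>(C_D)\<^sup>3\<close>, contradicting weak
  mixing. So some visit time \<open>n\<close> gives \<open>p = n + 1\<close> with \<open>\<mu>(C_{D \<union> (D + p)}) > 0\<close> and
  \<open>(D + p) \<inter> S = {}\<close>. Iterating \<open>D \<mapsto> D \<union> (D + p)\<close> from \<open>D = {0}\<close> yields \<open>p\<^sub>0, p\<^sub>1, \<dots>\<close>
  such that the \<open>k\<close>-th set contains all finite sums of the first \<open>k\<close> of them; hence
  every finite sum of the \<open>p\<^sub>i\<close> lies outside \<open>S\<close>.\<close>

lemma cesaro_limit_le_shifted:
  fixes a b :: "nat \<Rightarrow> real"
  assumes a: "(\<lambda>N. (\<Sum>n<N. a n) / real N) \<longlonglongrightarrow> \<alpha>"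
    and b: "(\<lambda>N. (\<Sum>n<N. b n) / real N) \<longlonglongrightarrow> \<beta>"
    and le: "\<And>n. a n \<le> b (Suc n)" and "b 0 \<ge> 0"
  shows "\<alpha> \<le> \<beta>"
proof -
  have "(\<lambda>N. (\<Sum>n<Suc N. b n) / real (Suc N) * (real (Suc N) / real N)) \<longlonglongrightarrow> \<beta> * 1"
    using LIMSEQ_Suc[OF b] LIMSEQ_Suc_n_over_n by (intro tendsto_intros) auto
  moreover have "(\<Sum>n<N. a n) / real N \<le> (\<Sum>n<Suc N. b n) / real (Suc N) * (real (Suc N) / real N)"
    if "N \<ge> 1" for N
  proof -
    have "(\<Sum>n<N. a n) \<le> (\<Sum>n<N. b (Suc n))" by (rule sum_mono) (rule le)
    also have "\<dots> \<le> (\<Sum>n<Suc N. b n)" using \<open>b 0 \<ge> 0\<close> unfolding sum.lessThan_Suc_shift by simp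
    finally show ?thesis using that by (simp add: divide_right_mono del: of_nat_Suc)
  qed
  ultimately show ?thesis using LIMSEQ_le[OF a] by auto
qed

lemma invariant_borel_probD:
  assumes "invariant_borel_prob X M"
  shows "space M = X" "sets M = sets (restrict_space borel X)"
    "shift \<in> measurable M M"
  using assms by (simp_all add: invariant_borel_prob_def)

lemma funpow_shift_apply: "(shift ^^ n) x j = x (j + n)"
  by (induction n arbitrary: j) (auto simp: shift_def)

lemma funpow_shift_in_space:
  assumes "invariant_borel_prob X M" "x \<in> X"
  shows "(shift ^^ n) x \<in> X"
proof -
  have "shift y \<in> X" if "y \<in> X" for y
    using measurable_space[OF invariant_borel_probD(3)[OF assms(1)]] that
    by (simp add: invariant_borel_probD(1)[OF assms(1)])
  then show ?thesis using assms(2) by (induction n) auto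
qed

definition zero_cylinder :: "(nat \<Rightarrow> bool) set \<Rightarrow> nat set \<Rightarrow> (nat \<Rightarrow> bool) set" where
  "zero_cylinder X D = {x \<in> X. \<forall>j\<in>D. \<not> x j}"

lemma zero_cylinder_sets:
  assumes "sets M = sets (restrict_space borel X)" "finite D"
  shows "zero_cylinder X D \<in> sets M"
proof -
  have "open {x::nat \<Rightarrow> bool. \<not> x j}" for j
    using open_vimage[of "{False}" "\<lambda>x::nat \<Rightarrow> bool. x j"]
    by (simp add: vimage_def discrete_topology_class.open_discrete)
  then have "open (\<Inter>j\<in>D. {x::nat \<Rightarrow> bool. \<not> x j})"
    using \<open>finite D\<close> by blast
  moreover have "zero_cylinder X D = X \<inter> (\<Inter>j\<in>D. {x. \<not> x j})"
    by (auto simp: zero_cylinder_def)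
  ultimately show ?thesis using assms(1) by (simp add: sets_restrict_space borel_open)
qed

lemma continuous_on_indicator_zero_cylinder:
  assumes "finite D"
  shows "continuous_on X (indicator (zero_cylinder X D) :: _ \<Rightarrow> real)"
proof -
  have coord: "continuous_on UNIV (\<lambda>x::nat \<Rightarrow> bool. if x j then 0 else 1 :: real)" for j
    using continuous_on_compose[OF continuous_on_product_coordinates[of j]
        Topological_Spaces.continuous_on_discrete[of _ "\<lambda>b::bool. if b then 0 else 1 :: real"]]
    by (simp add: o_def)
  have "continuous_on X (\<lambda>x. \<Prod>j\<in>D. if x j then 0 else 1 :: real)"
    by (rule continuous_on_subset[OF continuous_on_prod[OF coord]]) simp
  moreover have "(\<Prod>j\<in>D. if x j then 0 else 1 :: real) = indicator (zero_cylinder X D) x"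
    if "x \<in> X" for x
    using \<open>finite D\<close> that
    by (induction D rule: finite_induct) (auto simp: zero_cylinder_def indicator_def)
  ultimately show ?thesis by (simp cong: continuous_on_cong)
qed

lemma funpow_shift_vimage_zero_cylinder:
  assumes "invariant_borel_prob X M"
  shows "(shift ^^ n) -` zero_cylinder X D \<inter> X = zero_cylinder X ((\<lambda>j. j + n) ` D)"
  using funpow_shift_in_space[OF assms]
  by (auto simp: zero_cylinder_def funpow_shift_apply)

lemma generic_point_visits_zero_cylinder:
  assumes inv: "invariant_borel_prob X M" and gen: "generic_point X M \<xi>" and "finite D"
  shows "(\<lambda>N. (\<Sum>n<N. indicator (zero_cylinder X D) ((shift ^^ n) \<xi>)) / real N)
           \<longlonglongrightarrow> measure M (zero_cylinder X D)"
proof -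
  have "integral\<^sup>L M (indicator (zero_cylinder X D)) = measure M (zero_cylinder X D \<inter> space M)"
    by simp
  also have "zero_cylinder X D \<inter> space M = zero_cylinder X D"
    by (auto simp: zero_cylinder_def invariant_borel_probD(1)[OF inv])
  finally have "integral\<^sup>L M (indicator (zero_cylinder X D)) = measure M (zero_cylinder X D)" .
  then show ?thesis
    using gen continuous_on_indicator_zero_cylinder[OF \<open>finite D\<close>]
    unfolding generic_point_def by metis
qed

lemma indic_pt_visits_zero_cylinder_0:
  assumes "has_density S d" and orb: "\<And>n. (shift ^^ n) (indic_pt S) \<in> X"
  shows "(\<lambda>N. (\<Sum>n<N. indicator (zero_cylinder X {0}) ((shift ^^ n) (indic_pt S))) / real N)
           \<longlonglongrightarrow> 1 - d"
proof (rule Lim_transform_eventually)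
  show "(\<lambda>N. 1 - real (card (S \<inter> {1..N})) / real N) \<longlonglongrightarrow> 1 - d"
    using assms(1) unfolding has_density_def by (intro tendsto_intros)
  have visits: "(\<Sum>n<N. indicator (zero_cylinder X {0}) ((shift ^^ n) (indic_pt S)))
                  = real N - real (card (S \<inter> {1..N}))" for N
  proof -
    have "(\<Sum>n<N. indicator (zero_cylinder X {0}) ((shift ^^ n) (indic_pt S)))
            = (\<Sum>n<N. 1 - indicator S (Suc n) :: real)"
      using orb
      by (intro sum.cong) (auto simp: zero_cylinder_def funpow_shift_apply indic_pt_def indicator_def)
    also have "\<dots> = real N - (\<Sum>k\<in>{1..N}. indicator S k)"
      using sum.atLeast1_atMost_eq[of "indicator S :: nat \<Rightarrow> real" N] by (simp add: sum_subtractf)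
    also have "(\<Sum>k\<in>{1..N}. indicator S k) = real (card (S \<inter> {1..N}))"
      by (simp add: indicator_def sum.If_cases Int_def conj_commute)
    finally show ?thesis .
  qed
  show "\<forall>\<^sub>F N in sequentially. 1 - real (card (S \<inter> {1..N})) / real N
      = (\<Sum>n<N. indicator (zero_cylinder X {0}) ((shift ^^ n) (indic_pt S))) / real N"
    unfolding eventually_sequentially visits by (auto intro!: exI[of _ 1] simp: diff_divide_distrib)
qed

lemma weakly_mixing_good_return:
  assumes inv: "invariant_borel_prob X M" and gen: "generic_point X M \<xi>"
    and wm: "weakly_mixing M" and finite: "finite D"
    and pos: "measure M (zero_cylinder X D) > 0"
  shows "\<exists>n. (shift ^^ n) \<xi> \<in> zero_cylinder X D \<and>
             measure M (zero_cylinder X (D \<union> (\<lambda>j. j + Suc n) ` D)) > 0"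
proof (rule ccontr)
  assume no_return: "\<not> ?thesis"
  define B where "B = zero_cylinder X D"
  have "B \<in> sets M"
    unfolding B_def by (rule zero_cylinder_sets[OF invariant_borel_probD(2)[OF inv] finite])
  then have mixing: "(\<lambda>N. (\<Sum>n<N. \<bar>measure M (B \<inter> ((shift ^^ n) -` B \<inter> space M))
                                   - measure M B * measure M B\<bar>) / real N) \<longlonglongrightarrow> 0"
    using wm unfolding weakly_mixing_def by blast
  have return_set:
    "B \<inter> ((shift ^^ n) -` B \<inter> space M) = zero_cylinder X (D \<union> (\<lambda>j. j + n) ` D)" for n
    using funpow_shift_vimage_zero_cylinder[OF inv, of n D]
    by (auto simp: B_def zero_cylinder_def invariant_borel_probD(1)[OF inv])
  \<comment> \<open>At a visit time \<open>m\<close> the mixing defect at time \<open>m + 1\<close> is all of \<open>\<mu>(B)\<^sup>2\<close>.\<close>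
  have defect: "measure M B * measure M B * indicator B ((shift ^^ m) \<xi>)
        \<le> \<bar>measure M (B \<inter> ((shift ^^ Suc m) -` B \<inter> space M)) - measure M B * measure M B\<bar>" for m
  proof (cases "(shift ^^ m) \<xi> \<in> B")
    case True
    then have "\<not> measure M (zero_cylinder X (D \<union> (\<lambda>j. j + Suc m) ` D)) > 0"
      using no_return unfolding B_def by blast
    then have "measure M (B \<inter> ((shift ^^ Suc m) -` B \<inter> space M)) = 0"
      unfolding return_set using measure_nonneg[of M] by (meson order.antisym not_less)
    then show ?thesis using True by simp
  next
    case False
    then show ?thesis by simp
  qed
  have visits: "(\<lambda>N. (\<Sum>n<N. measure M B * measure M B * indicator B ((shift ^^ n) \<xi>)) / real N)
                   \<longlonglongrightarrow> measure M B * measure M B * measure M B"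
    using tendsto_mult_left[OF generic_point_visits_zero_cylinder[OF inv gen finite]]
    by (simp add: B_def sum_distrib_left[symmetric])
  have "measure M B * measure M B * measure M B \<le> 0"
    by (rule cesaro_limit_le_shifted[OF visits mixing defect]) simp
  then show False using pos by (simp add: B_def mult_le_0_iff)
qed

fun iterated_translates :: "(nat set \<Rightarrow> nat) \<Rightarrow> nat \<Rightarrow> nat set" where
  "iterated_translates g 0 = {0}"
| "iterated_translates g (Suc k) =
     iterated_translates g k \<union> (\<lambda>j. j + g (iterated_translates g k)) ` iterated_translates g k"

lemma finite_iterated_translates: "finite (iterated_translates g k)"
  by (induction k) auto

lemma sum_in_iterated_translates:
  "F \<subseteq> {..<k} \<Longrightarrow> (\<Sum>i\<in>F. g (iterated_translates g i)) \<in> iterated_translates g k"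
proof (induction k arbitrary: F)
  case 0
  then show ?case by simp
next
  case (Suc k)
  show ?case
  proof (cases "k \<in> F")
    case True
    have "finite F" using Suc.prems finite_subset by blast
    moreover have "(\<Sum>i\<in>F - {k}. g (iterated_translates g i)) \<in> iterated_translates g k"
      using Suc.prems by (intro Suc.IH) auto
    ultimately show ?thesis using True by (simp add: sum.remove)
  next
    case False
    then have "F \<subseteq> {..<k}" using Suc.prems by (auto simp: less_Suc_eq)
    then show ?thesis using Suc.IH by simp
  qed
qed

lemma IP_set_disjoint_if_translates_avoid:
  assumes pos: "\<And>k. g (iterated_translates g k) \<ge> 1"
    and avoid: "\<And>k j. j \<in> iterated_translates g k \<Longrightarrow> j + g (iterated_translates g k) \<notin> S"
  shows "\<exists>E. IP_set E \<and> E \<inter> S = {}"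
proof (intro exI conjI)
  define p where "p i = g (iterated_translates g i)" for i
  show "IP_set {\<Sum>i\<in>F. p i | F. finite F \<and> F \<noteq> {}}"
    unfolding IP_set_def using pos by (intro exI[of _ p]) (simp add: p_def)
  have "(\<Sum>i\<in>F. p i) \<notin> S" if "finite F" "F \<noteq> {}" for F
  proof -
    have "F - {Max F} \<subseteq> {..<Max F}"
      using that by (auto simp: less_le)
    moreover have "(\<Sum>i\<in>F. p i) = (\<Sum>i\<in>F - {Max F}. p i) + p (Max F)"
      using that by (simp add: sum.remove add.commute)
    ultimately show ?thesis
      using avoid[OF sum_in_iterated_translates] by (simp add: p_def)
  qed
  then show "{\<Sum>i\<in>F. p i | F. finite F \<and> F \<noteq> {}} \<inter> S = {}" by blast
qed

lemma weakly_mixing_generic_avoiding_IP_set: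
  assumes inv: "invariant_borel_prob X M" and gen: "generic_point X M (indic_pt S)"
    and wm: "weakly_mixing M" and base: "measure M (zero_cylinder X {0}) > 0"
  shows "\<exists>E. IP_set E \<and> E \<inter> S = {}"
proof (rule IP_set_disjoint_if_translates_avoid)
  define good where "good D n \<longleftrightarrow> (shift ^^ n) (indic_pt S) \<in> zero_cylinder X D \<and>
      measure M (zero_cylinder X (D \<union> (\<lambda>j. j + Suc n) ` D)) > 0" for D n
  \<comment> \<open>\<open>Suc\<close>: coordinate \<open>j\<close> of \<open>indic_pt S\<close> records whether \<open>j + 1 \<in> S\<close>.\<close>
  define g where "g D = Suc (SOME n. good D n)" for D
  have g_good: "good D (g D - 1)" if "finite D" "measure M (zero_cylinder X D) > 0" for D
    unfolding g_def good_def
    using someI_ex[OF weakly_mixing_good_return[OF inv gen wm that]] by simp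
  have measure_pos: "measure M (zero_cylinder X (iterated_translates g k)) > 0" for k
    using base g_good[OF finite_iterated_translates] unfolding good_def g_def
    by (induction k) auto
  show "g (iterated_translates g k) \<ge> 1" for k
    by (simp add: g_def)
  show "j + g (iterated_translates g k) \<notin> S" if "j \<in> iterated_translates g k" for k j
    using g_good[OF finite_iterated_translates measure_pos, of k] that
    by (auto simp: good_def g_def zero_cylinder_def funpow_shift_apply indic_pt_def)
qed

theorem mainTheorem8:
  fixes S :: "nat set" and d :: real
  assumes "WM_set S"
    and "has_density S d"
    and "d < 1"
  shows "\<not> IP_star_set S \<and> (\<exists>E. IP_set E \<and> E \<inter> S = {})"
proof -
  define X where "X = orbit_closure (indic_pt S)"
  obtain M where inv: "invariant_borel_prob X M" and gen: "generic_point X M (indic_pt S)"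
    and wm: "weakly_mixing M"
    using \<open>WM_set S\<close> unfolding WM_set_def X_def by blast
  have "(shift ^^ n) (indic_pt S) \<in> X" for n
    unfolding X_def orbit_closure_def by (rule closure_subset[THEN subsetD]) (rule rangeI)
  then have "measure M (zero_cylinder X {0}) = 1 - d"
    using LIMSEQ_unique[OF generic_point_visits_zero_cylinder[OF inv gen]
        indic_pt_visits_zero_cylinder_0[OF \<open>has_density S d\<close>]] by simp
  then have "\<exists>E. IP_set E \<and> E \<inter> S = {}"
    using weakly_mixing_generic_avoiding_IP_set[OF inv gen wm] \<open>d < 1\<close> by simp
  then show ?thesis unfolding IP_star_set_def by blast
qed

end
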